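(* Let $M_1$ and $M_2$ be matroids on disjoint finite ground sets $E_1$ and $E_2$, of ranks $r_1$ and $r_2$. Then $P(M_1\oplus M_2)$ has a nontrivial hyperplane split if and only if $P(M_1)$ or $P(M_2)$ has a nontrivial hyperplane split.
   Context: The direct sum $M_1\oplus M_2$ is the matroid on $E_1\cup E_2$ with bases $\{B_1\cup B_2: B_1\in\mathcal{B}(M_1), B_2\in\mathcal{B}(M_2)\}$. For a matroid $N$ on a finite set $E$, $P(N)=\mathrm{conv}\{\sum_{i\in B}e_i : B \text{ a base of } N\}\subset\mathbb{R}^E$, $e_i$ the standard basis vectors. A hyperplane split of $P(N)$ is an expression $P(N)=P(N_1)\cup P(N_2)$ with $N_1,N_2$ matroids on $E$ such that $P(N_1)\cap P(N_2)$ is a face of both $P(N_1)$ and $P(N_2)$; it is nontrivial if $P(N_1)\neq P(N)$ and $P(N_2)\neq P(N)$. *)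

theory Defs
  imports "HOL-Analysis.Analysis"
begin

text \<open>A matroid on a ground set E (a subset of a finite type 'a) is given by its family of bases.\<close>
definition matroid_on :: "'a set \<Rightarrow> 'a set set \<Rightarrow> bool" where
  "matroid_on E \<B> \<longleftrightarrow> finite E \<and> \<B> \<noteq> {} \<and> (\<forall>B\<in>\<B>. B \<subseteq> E) \<and>
     (\<forall>B1\<in>\<B>. \<forall>B2\<in>\<B>. \<forall>x\<in>B1 - B2. \<exists>y\<in>B2 - B1. insert y (B1 - {x}) \<in> \<B>)"

definition direct_sum_bases :: "'a set set \<Rightarrow> 'a set set \<Rightarrow> 'a set set" where
  "direct_sum_bases \<B>1 \<B>2 = {B1 \<union> B2 | B1 B2. B1 \<in> \<B>1 \<and> B2 \<in> \<B>2}"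

text \<open>Indicator vector sum of e_i over i in B; coordinates are indexed by the finite type 'a
  (coordinates outside the ground set are identically zero on the polytope).\<close>
definition ind_vec :: "'a::finite set \<Rightarrow> real ^ 'a" where
  "ind_vec B = (\<chi> i. if i \<in> B then 1 else 0)"

definition base_polytope :: "'a::finite set set \<Rightarrow> (real ^ 'a) set" where
  "base_polytope \<B> = convex hull (ind_vec ` \<B>)"

definition has_nontrivial_hyperplane_split :: "'a::finite set \<Rightarrow> 'a set set \<Rightarrow> bool" where
  "has_nontrivial_hyperplane_split E \<B> \<longleftrightarrow>
     (\<exists>\<B>1 \<B>2. matroid_on E \<B>1 \<and> matroid_on E \<B>2 \<and>
        base_polytope \<B> = base_polytope \<B>1 \<union> base_polytope \<B>2 \<and>
        (base_polytope \<B>1 \<inter> base_polytope \<B>2) face_of base_polytope \<B>1 \<and>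
        (base_polytope \<B>1 \<inter> base_polytope \<B>2) face_of base_polytope \<B>2 \<and>
        base_polytope \<B>1 \<noteq> base_polytope \<B> \<and> base_polytope \<B>2 \<noteq> base_polytope \<B>)"

end

theory Submission
  imports Defs
begin

(*
  Vectors supported on E1 and on E2 add "coordinatewise independently", so
  P(M1 (+) M2) = P(M1) + P(M2) is a Minkowski sum behaving like a Cartesian product.
  For such sums we show: (a) a split S = X u Y into faces lifts to the split
  S + T = (X + T) u (Y + T); (b) conversely, if S1 + S2 = (X1 + X2) u (Y1 + Y2) is a split
  with X_i, Y_i inside S_i, then a covering argument forces one factor to be untouched, and
  the split is already a split of the other factor.

  The vertices of P(N) are exactly the indicator vectors of the bases of N, so a
  piece P(N) of a split of P(M1 (+) M2) has N contained in the direct-sum bases.  Such a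
  matroid N is closed under exchanging its E1- and E2-parts (by basis exchange and equal
  cardinalities), hence is itself the direct sum of its restrictions to E1 and E2.
*)

definition is_split :: "'b::real_vector set \<Rightarrow> 'b set \<Rightarrow> 'b set \<Rightarrow> bool" where
  "is_split S X Y \<longleftrightarrow> S = X \<union> Y \<and> X \<inter> Y face_of X \<and> X \<inter> Y face_of Y \<and> X \<noteq> S \<and> Y \<noteq> S"

lemma hyperplane_split_iff:
  "has_nontrivial_hyperplane_split E \<B> \<longleftrightarrow>
     (\<exists>\<N>1 \<N>2. matroid_on E \<N>1 \<and> matroid_on E \<N>2 \<and>
        is_split (base_polytope \<B>) (base_polytope \<N>1) (base_polytope \<N>2))"
  unfolding has_nontrivial_hyperplane_split_def is_split_def by blast

section \<open>Minkowski sums of sets supported on disjoint coordinates\<close>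

definition supported :: "'a::finite set \<Rightarrow> (real^'a) set" where
  "supported E = {x. \<forall>i. i \<notin> E \<longrightarrow> x $ i = 0}"

lemma supported_combination:
  "x \<in> supported E \<Longrightarrow> y \<in> supported E \<Longrightarrow> a *\<^sub>R x + b *\<^sub>R y \<in> supported E"
  by (simp add: supported_def)

lemma convex_supported: "convex (supported E)"
  unfolding convex_def supported_def by simp

lemma supported_sum_unique:
  assumes "x \<in> supported E" "x' \<in> supported E" "y \<in> supported F" "y' \<in> supported F"
    and "E \<inter> F = {}" and "x + y = x' + y'"
  shows "x = x' \<and> y = y'"
proof -
  have "x $ i = x' $ i \<and> y $ i = y' $ i" for i
  proof -
    have "x $ i + y $ i = x' $ i + y' $ i" using assms(6) by (metis vector_add_component)
    then show ?thesis using assms(1-5) unfolding supported_def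
      by (cases "i \<in> E"; cases "i \<in> F") auto
  qed
  then show ?thesis by (simp add: vec_eq_iff)
qed

lemma supported_plus_mem:
  assumes "S \<subseteq> supported E" "T \<subseteq> supported F" "E \<inter> F = {}"
    and "x \<in> supported E" "y \<in> supported F"
  shows "x + y \<in> S + T \<longleftrightarrow> x \<in> S \<and> y \<in> T"
proof
  assume "x + y \<in> S + T"
  then obtain s t where "s \<in> S" "t \<in> T" "x + y = s + t" by (auto elim: set_plus_elim)
  with supported_sum_unique[of x E s y F t] assms show "x \<in> S \<and> y \<in> T" by auto
qed auto

lemma supported_plus_Int:
  assumes "S \<subseteq> supported E" "T \<subseteq> supported F" "T' \<subseteq> supported F" "E \<inter> F = {}"
  shows "(S + T) \<inter> (S + T') = S + (T \<inter> T')"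
proof
  show "(S + T) \<inter> (S + T') \<subseteq> S + (T \<inter> T')"
  proof
    fix z assume "z \<in> (S + T) \<inter> (S + T')"
    then obtain s t s' t' where "s \<in> S" "t \<in> T" "s' \<in> S" "t' \<in> T'" "z = s + t" "z = s' + t'"
      by (auto elim!: set_plus_elim)
    with supported_sum_unique[of s E s' t F t'] assms show "z \<in> S + (T \<inter> T')" by auto
  qed
qed (auto simp: set_plus_def)

lemma supported_plus_cancel:
  assumes "S \<subseteq> supported E" "S' \<subseteq> supported E" "T \<subseteq> supported F" "T' \<subseteq> supported F"
    and "E \<inter> F = {}" and "S + T \<subseteq> S' + T'" and "T \<noteq> {}"
  shows "S \<subseteq> S'"
proof
  fix x assume "x \<in> S"
  obtain y where "y \<in> T" using assms(7) by auto
  with \<open>x \<in> S\<close> have "x + y \<in> S' + T'" using assms(6) by auto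
  then show "x \<in> S'"
    using supported_plus_mem[OF assms(2,4,5)] assms(1,3) \<open>x \<in> S\<close> \<open>y \<in> T\<close> by auto
qed

lemma supported_plus_cover:
  assumes "S \<subseteq> supported E" "T \<subseteq> supported F" "E \<inter> F = {}"
    and "X1 \<subseteq> S" "Y1 \<subseteq> S" "X2 \<subseteq> T" "Y2 \<subseteq> T"
    and "S + T \<subseteq> (X1 + X2) \<union> (Y1 + Y2)"
  shows "X1 = S \<or> Y2 = T"
proof (rule ccontr)
  assume "\<not> (X1 = S \<or> Y2 = T)"
  then obtain p q where p: "p \<in> S" "p \<notin> X1" and q: "q \<in> T" "q \<notin> Y2" using assms(4,7) by blast
  have "p + q \<in> (X1 + X2) \<union> (Y1 + Y2)" using assms(8) p q by auto
  then show False
    using supported_plus_mem[of X1 E X2 F p q] supported_plus_mem[of Y1 E Y2 F p q] assms p q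
    by blast
qed

lemma face_of_supported_plus:
  assumes face: "G face_of S" and "S \<subseteq> supported E" "T \<subseteq> supported F" "E \<inter> F = {}"
    and "convex T"
  shows "G + T face_of S + T"
  unfolding face_of_def
proof (intro conjI ballI impI)
  have GS: "G \<subseteq> S" using face face_of_imp_subset by blast
  then show "G + T \<subseteq> S + T" by (auto simp: set_plus_def)
  show "convex (G + T)" using face face_of_imp_convex assms(5) convex_set_plus by blast
  fix a b x assume "a \<in> S + T" "b \<in> S + T" "x \<in> G + T" and seg: "x \<in> open_segment a b"
  then obtain a1 a2 b1 b2 g t where a: "a1 \<in> S" "a2 \<in> T" "a = a1 + a2"
    and b: "b1 \<in> S" "b2 \<in> T" "b = b1 + b2" and x: "g \<in> G" "t \<in> T" "x = g + t"
    by (auto elim!: set_plus_elim)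
  obtain u where u: "0 < u" "u < 1" "x = (1 - u) *\<^sub>R a + u *\<^sub>R b"
    using seg by (auto simp: in_segment)
  have "g + t = ((1 - u) *\<^sub>R a1 + u *\<^sub>R b1) + ((1 - u) *\<^sub>R a2 + u *\<^sub>R b2)"
    using u(3) x(3) a(3) b(3) by (simp add: algebra_simps)
  moreover have "g \<in> supported E" "t \<in> supported F" using GS x assms(2,3) by auto
  moreover have "(1 - u) *\<^sub>R a1 + u *\<^sub>R b1 \<in> supported E" "(1 - u) *\<^sub>R a2 + u *\<^sub>R b2 \<in> supported F"
    using a b assms(2,3) by (auto intro!: supported_combination)
  ultimately have g: "g = (1 - u) *\<^sub>R a1 + u *\<^sub>R b1"
    using supported_sum_unique assms(4) by blast
  have "a1 \<in> G \<and> b1 \<in> G"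
  proof (cases "a1 = b1")
    case True
    then show ?thesis using g x by (simp add: algebra_simps flip: scaleR_add_left)
  next
    case False
    then have "g \<in> open_segment a1 b1" using g u by (auto simp: in_segment)
    then show ?thesis using face_ofD[OF face] a b x by blast
  qed
  then show "a \<in> G + T" "b \<in> G + T" using a b by auto
qed

lemma face_of_supported_plus_cancel:
  assumes face: "S + G face_of S + T" and "S \<noteq> {}" and "S \<subseteq> supported E"
    and "T \<subseteq> supported F" "E \<inter> F = {}" and "G \<subseteq> T"
  shows "G face_of T"
proof -
  obtain s where s: "s \<in> S" using assms(2) by auto
  have GF: "G \<subseteq> supported F" using assms(4,6) by auto
  have shift: "s + y \<in> S + G \<longleftrightarrow> y \<in> G" if "y \<in> supported F" for y
    using supported_plus_mem[OF assms(3) GF assms(5) _ that] s assms(3) by auto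
  show ?thesis
    unfolding face_of_def
  proof (intro conjI ballI impI)
    show "G \<subseteq> T" by fact
    show "convex G"
      unfolding convex_alt
    proof (intro ballI allI impI)
      fix g1 g2 and u :: real assume g: "g1 \<in> G" "g2 \<in> G" and u: "0 \<le> u \<and> u \<le> 1"
      have "(1 - u) *\<^sub>R (s + g1) + u *\<^sub>R (s + g2) \<in> S + G"
        using face_of_imp_convex[OF face] u s g unfolding convex_alt by (simp add: set_plus_intro)
      moreover have "(1 - u) *\<^sub>R (s + g1) + u *\<^sub>R (s + g2) = s + ((1 - u) *\<^sub>R g1 + u *\<^sub>R g2)"
        by (simp add: algebra_simps)
      moreover have "(1 - u) *\<^sub>R g1 + u *\<^sub>R g2 \<in> supported F"
        using g GF by (auto intro!: supported_combination)
      ultimately show "(1 - u) *\<^sub>R g1 + u *\<^sub>R g2 \<in> G" using shift by simp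
    qed
    fix a b x assume a: "a \<in> T" and b: "b \<in> T" and x: "x \<in> G" and seg: "x \<in> open_segment a b"
    obtain u where u: "0 < u" "u < 1" "x = (1 - u) *\<^sub>R a + u *\<^sub>R b" "a \<noteq> b"
      using seg by (auto simp: in_segment)
    have "s + x \<in> open_segment (s + a) (s + b)"
      unfolding in_segment using u by (intro conjI exI[of _ u]) (auto simp: algebra_simps)
    then have "s + a \<in> S + G \<and> s + b \<in> S + G"
      using face_ofD[OF face] s a b x by blast
    then show "a \<in> G" "b \<in> G" using shift a b assms(4) by auto
  qed
qed

section \<open>Splits of Minkowski sums on disjoint coordinates\<close>

lemma is_split_plus:
  assumes split: "is_split S X Y" and "S \<subseteq> supported E" "T \<subseteq> supported F" "E \<inter> F = {}"
    and "convex T" "T \<noteq> {}"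
  shows "is_split (S + T) (X + T) (Y + T)"
proof -
  have XY: "X \<subseteq> supported E" "Y \<subseteq> supported E" using split assms(2) by (auto simp: is_split_def)
  have Int: "(X + T) \<inter> (Y + T) = (X \<inter> Y) + T"
    using supported_plus_Int[OF assms(3) XY Int_commute[THEN trans, OF assms(4)]]
    by (simp add: add.commute)
  have proper: "Z + T \<noteq> S + T" if "Z \<subseteq> supported E" "Z \<noteq> S" "Z \<subseteq> S" for Z
    using supported_plus_cancel[OF assms(2) that(1) assms(3,3,4) _ assms(6)] that(2,3) by blast
  have S: "S = X \<union> Y" "X \<noteq> S" "Y \<noteq> S" and faces: "X \<inter> Y face_of X" "X \<inter> Y face_of Y"
    using split unfolding is_split_def by blast+
  show ?thesis
    unfolding is_split_def Int
  proof (intro conjI)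
    show "S + T = (X + T) \<union> (Y + T)" using S(1) by (simp add: Un_set_plus)
    show "X \<inter> Y + T face_of X + T" by (rule face_of_supported_plus[OF faces(1) XY(1) assms(3-5)])
    show "X \<inter> Y + T face_of Y + T" by (rule face_of_supported_plus[OF faces(2) XY(2) assms(3-5)])
    show "X + T \<noteq> S + T" "Y + T \<noteq> S + T" using proper XY S by auto
  qed
qed

lemma is_split_plus_cancel:
  assumes split: "is_split (S + T) (S + X) (S + Y)"
    and "S \<noteq> {}" "S \<subseteq> supported E" "T \<subseteq> supported F" "E \<inter> F = {}" "X \<subseteq> T" "Y \<subseteq> T"
  shows "is_split T X Y"
proof -
  have XY: "X \<subseteq> supported F" "Y \<subseteq> supported F" using assms(4,6,7) by auto
  obtain s where s: "s \<in> S" using assms(2) by auto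
  have "T \<subseteq> X \<union> Y"
  proof
    fix y assume y: "y \<in> T"
    have sy: "s \<in> supported E" "y \<in> supported F" using s y assms(3,4) by auto
    have "s + y \<in> (S + X) \<union> (S + Y)" using split s y by (auto simp: is_split_def)
    then show "y \<in> X \<union> Y"
      using supported_plus_mem[OF assms(3) XY(1) assms(5) sy] supported_plus_mem[OF assms(3) XY(2) assms(5) sy]
      by auto
  qed
  moreover have "(S + X) \<inter> (S + Y) = S + (X \<inter> Y)" using supported_plus_Int[OF assms(3) XY assms(5)] .
  ultimately show ?thesis
    using split face_of_supported_plus_cancel[OF _ assms(2,3), of "X \<inter> Y"] XY assms(5-7)
    unfolding is_split_def by auto
qed

lemma is_split_plus_factor:
  assumes split: "is_split (S1 + S2) (X1 + X2) (Y1 + Y2)"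
    and S1: "S1 \<subseteq> supported E1" "X1 \<subseteq> S1" "Y1 \<subseteq> S1" "S1 \<noteq> {}"
    and S2: "S2 \<subseteq> supported E2" "X2 \<subseteq> S2" "Y2 \<subseteq> S2" "S2 \<noteq> {}"
    and D: "E1 \<inter> E2 = {}"
  shows "is_split S1 X1 Y1 \<or> is_split S2 X2 Y2"
proof -
  have cover: "S1 + S2 \<subseteq> (X1 + X2) \<union> (Y1 + Y2)" "S1 + S2 \<subseteq> (Y1 + Y2) \<union> (X1 + X2)"
    using split by (auto simp: is_split_def)
  have c1: "X1 = S1 \<or> Y2 = S2" by (rule supported_plus_cover[OF S1(1) S2(1) D S1(2,3) S2(2,3) cover(1)])
  have c2: "Y1 = S1 \<or> X2 = S2" by (rule supported_plus_cover[OF S1(1) S2(1) D S1(3,2) S2(3,2) cover(2)])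
  have proper: "X1 + X2 \<noteq> S1 + S2" "Y1 + Y2 \<noteq> S1 + S2" using split by (auto simp: is_split_def)
  show ?thesis
  proof (cases "X1 = S1")
    case True
    with c2 proper have "Y1 = S1" by auto
    with True split have "is_split S2 X2 Y2"
      using is_split_plus_cancel[OF _ S1(4,1) S2(1) D S2(2,3)] by simp
    then show ?thesis ..
  next
    case False
    with c1 c2 proper have "Y2 = S2" "X2 = S2" by auto
    with split have "is_split (S2 + S1) (S2 + X1) (S2 + Y1)" by (simp add: add.commute)
    then have "is_split S1 X1 Y1"
      using is_split_plus_cancel[OF _ S2(4,1) S1(1) _ S1(2,3)] D by (simp add: Int_commute)
    then show ?thesis ..
  qed
qed

section \<open>Base polytopes\<close>

lemma ind_vec_Un: "A \<inter> B = {} \<Longrightarrow> ind_vec (A \<union> B) = ind_vec A + ind_vec B"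
  by (auto simp: ind_vec_def vec_eq_iff)

lemma ind_vec_inject: "ind_vec A = ind_vec B \<longleftrightarrow> A = B"
  by (auto simp: ind_vec_def vec_eq_iff split: if_splits)

lemma base_polytope_supported: "\<forall>B\<in>\<B>. B \<subseteq> E \<Longrightarrow> base_polytope \<B> \<subseteq> supported E"
  unfolding base_polytope_def
  by (rule hull_minimal[where S=convex, OF _ convex_supported]) (fastforce simp: supported_def ind_vec_def)

lemma base_polytope_mono: "\<A> \<subseteq> \<B> \<Longrightarrow> base_polytope \<A> \<subseteq> base_polytope \<B>"
  unfolding base_polytope_def by (intro hull_mono image_mono)

lemma base_polytope_direct_sum:
  assumes "\<forall>B\<in>\<B>1. B \<subseteq> E1" "\<forall>B\<in>\<B>2. B \<subseteq> E2" "E1 \<inter> E2 = {}"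
  shows "base_polytope (direct_sum_bases \<B>1 \<B>2) = base_polytope \<B>1 + base_polytope \<B>2"
proof -
  have Un: "ind_vec (B1 \<union> B2) = ind_vec B1 + ind_vec B2" if "B1 \<in> \<B>1" "B2 \<in> \<B>2" for B1 B2
    using that assms by (intro ind_vec_Un) blast
  have "ind_vec ` direct_sum_bases \<B>1 \<B>2 = ind_vec ` \<B>1 + ind_vec ` \<B>2"
  proof (intro equalityI subsetI)
    fix z assume "z \<in> ind_vec ` direct_sum_bases \<B>1 \<B>2"
    then obtain B1 B2 where "B1 \<in> \<B>1" "B2 \<in> \<B>2" "z = ind_vec (B1 \<union> B2)"
      by (auto simp: direct_sum_bases_def)
    with Un show "z \<in> ind_vec ` \<B>1 + ind_vec ` \<B>2" by auto
  next
    fix z assume "z \<in> ind_vec ` \<B>1 + ind_vec ` \<B>2"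
    then obtain B1 B2 where "B1 \<in> \<B>1" "B2 \<in> \<B>2" "z = ind_vec B1 + ind_vec B2"
      by (auto elim!: set_plus_elim)
    with Un show "z \<in> ind_vec ` direct_sum_bases \<B>1 \<B>2"
      unfolding direct_sum_bases_def by (intro image_eqI[of _ _ "B1 \<union> B2"]) auto
  qed
  then show ?thesis unfolding base_polytope_def by (simp add: convex_hull_set_plus)
qed

lemma unit_interval_combination_extreme:
  fixes a b u :: real
  assumes "0 \<le> a" "a \<le> 1" "0 \<le> b" "b \<le> 1" "0 < u" "u < 1"
    and "(1 - u) * a + u * b = 0 \<or> (1 - u) * a + u * b = 1"
  shows "a = b"
proof -
  have "0 \<le> (1 - u) * a" "0 \<le> u * b" "(1 - u) * a \<le> 1 - u" "u * b \<le> u"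
    using assms by (simp_all add: mult_left_le)
  moreover have "(1 - u) * a = 0 \<longleftrightarrow> a = 0" "u * b = 0 \<longleftrightarrow> b = 0"
    "(1 - u) * a = 1 - u \<longleftrightarrow> a = 1" "u * b = u \<longleftrightarrow> b = 1"
    using assms(5,6) by auto
  ultimately show ?thesis using assms(7) by (smt (verit))
qed

lemma ind_vec_extreme_point_of_cube: "ind_vec B extreme_point_of cbox 0 1"
  unfolding extreme_point_of_def
proof (intro conjI ballI)
  show "ind_vec B \<in> cbox 0 1" by (simp add: mem_box_cart ind_vec_def)
  fix a b :: "real^'a" assume a: "a \<in> cbox 0 1" and b: "b \<in> cbox 0 1"
  show "ind_vec B \<notin> open_segment a b"
  proof
    assume "ind_vec B \<in> open_segment a b"
    then obtain u where u: "0 < u" "u < 1" "ind_vec B = (1 - u) *\<^sub>R a + u *\<^sub>R b" "a \<noteq> b"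
      by (auto simp: in_segment)
    have "a $ i = b $ i" for i
    proof (rule unit_interval_combination_extreme)
      show "0 \<le> a $ i" "a $ i \<le> 1" "0 \<le> b $ i" "b $ i \<le> 1" using a b by (auto simp: mem_box_cart)
      have "(1 - u) * a $ i + u * b $ i = ind_vec B $ i" using u(3) by simp
      then show "(1 - u) * a $ i + u * b $ i = 0 \<or> (1 - u) * a $ i + u * b $ i = 1"
        by (simp add: ind_vec_def split: if_splits)
    qed (use u in auto)
    then show False using u(4) by (simp add: vec_eq_iff)
  qed
qed

lemma ind_vec_in_base_polytope: "ind_vec B \<in> base_polytope \<B> \<longleftrightarrow> B \<in> \<B>"
proof
  assume B: "ind_vec B \<in> base_polytope \<B>"
  have "base_polytope \<B> \<subseteq> cbox 0 1"
    unfolding base_polytope_def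
    by (rule hull_minimal[where S=convex, OF _ convex_box(1)]) (auto simp: mem_box_cart ind_vec_def)
  with B have "ind_vec B extreme_point_of base_polytope \<B>"
    using ind_vec_extreme_point_of_cube by (auto simp: extreme_point_of_def)
  then have "ind_vec B \<in> ind_vec ` \<B>"
    unfolding base_polytope_def by (rule extreme_point_of_convex_hull)
  then show "B \<in> \<B>" by (auto simp: ind_vec_inject)
qed (simp add: base_polytope_def hull_inc)

lemma base_polytope_subset_imp_bases_subset:
  "base_polytope \<N> \<subseteq> base_polytope \<B> \<Longrightarrow> \<N> \<subseteq> \<B>"
  using ind_vec_in_base_polytope by blast

section \<open>Matroids and direct sums\<close>

lemma matroid_on_bases_subset: "matroid_on E \<B> \<Longrightarrow> \<forall>B\<in>\<B>. B \<subseteq> E"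
  unfolding matroid_on_def by blast

lemma matroid_on_base_polytope_supported: "matroid_on E \<B> \<Longrightarrow> base_polytope \<B> \<subseteq> supported E"
  by (rule base_polytope_supported[OF matroid_on_bases_subset])

lemma matroid_on_base_polytope_nonempty: "matroid_on E \<B> \<Longrightarrow> base_polytope \<B> \<noteq> {}"
  unfolding matroid_on_def base_polytope_def by auto

lemma matroid_on_finite_base: "matroid_on E \<B> \<Longrightarrow> B \<in> \<B> \<Longrightarrow> finite B"
  unfolding matroid_on_def by (meson finite_subset)

text \<open>All bases have the same size; induction on the size of the difference B1 - B2,
  which shrinks by one under each exchange.\<close>
lemma matroid_on_bases_card:
  assumes M: "matroid_on E \<B>" and "B1 \<in> \<B>" "B2 \<in> \<B>"
  shows "card B1 = card B2"
proof -
  have "card B1 = card B2" if "B1 \<in> \<B>" "card (B1 - B2) = n" for n B1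
    using that
  proof (induction n arbitrary: B1)
    case 0
    have fin: "finite B1" "finite B2" using M 0 assms(3) matroid_on_finite_base by auto
    with 0 have sub: "B1 \<subseteq> B2" by auto
    have "B2 \<subseteq> B1"
    proof
      fix x assume "x \<in> B2"
      show "x \<in> B1"
      proof (rule ccontr)
        assume "x \<notin> B1"
        then have "\<exists>y\<in>B1 - B2. True"
          using M 0 assms(3) \<open>x \<in> B2\<close> unfolding matroid_on_def by blast
        then show False using sub by auto
      qed
    qed
    with sub show ?case by simp
  next
    case (Suc n)
    have fin: "finite B1" "finite B2" using M Suc assms(3) matroid_on_finite_base by auto
    then obtain x where x: "x \<in> B1 - B2" using Suc by (metis card.empty ex_in_conv nat.simps(3))
    then obtain y where y: "y \<in> B2 - B1" "insert y (B1 - {x}) \<in> \<B>"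
      using M Suc assms(3) unfolding matroid_on_def by blast
    have "insert y (B1 - {x}) - B2 = (B1 - B2) - {x}" using x y by auto
    then have "card (insert y (B1 - {x})) = card B2" using Suc x y fin by simp
    moreover have "card (insert y (B1 - {x})) = Suc (card (B1 - {x}))" using y fin by simp
    moreover have "Suc (card (B1 - {x})) = card B1" using x fin by (intro card_Suc_Diff1) auto
    ultimately show ?case by simp
  qed
  then show ?thesis using assms(2) by blast
qed

lemma direct_sum_bases_commute: "direct_sum_bases \<A> \<B> = direct_sum_bases \<B> \<A>"
  unfolding direct_sum_bases_def by (auto simp: Un_commute)

lemma direct_sum_bases_parts:
  assumes "matroid_on E1 \<B>1" "matroid_on E2 \<B>2" "E1 \<inter> E2 = {}" "B \<in> direct_sum_bases \<B>1 \<B>2"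
  shows "B \<inter> E1 \<in> \<B>1" "B \<inter> E2 \<in> \<B>2"
proof -
  obtain B1 B2 where "B1 \<in> \<B>1" "B2 \<in> \<B>2" "B = B1 \<union> B2"
    using assms(4) by (auto simp: direct_sum_bases_def)
  moreover have "B1 \<subseteq> E1" "B2 \<subseteq> E2"
    using matroid_on_bases_subset[OF assms(1)] matroid_on_bases_subset[OF assms(2)] calculation by auto
  ultimately have "B \<inter> E1 = B1" "B \<inter> E2 = B2" using assms(3) by auto
  with \<open>B1 \<in> \<B>1\<close> \<open>B2 \<in> \<B>2\<close> show "B \<inter> E1 \<in> \<B>1" "B \<inter> E2 \<in> \<B>2" by simp_all
qed

lemma matroid_on_base_polytope_direct_sum:
  "matroid_on E1 \<B>1 \<Longrightarrow> matroid_on E2 \<B>2 \<Longrightarrow> E1 \<inter> E2 = {} \<Longrightarrow>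
    base_polytope (direct_sum_bases \<B>1 \<B>2) = base_polytope \<B>1 + base_polytope \<B>2"
  by (rule base_polytope_direct_sum[OF matroid_on_bases_subset matroid_on_bases_subset])

text \<open>The direct sum of matroids on disjoint ground sets is a matroid: an exchange in one
  summand is an exchange in the sum.\<close>
lemma matroid_on_direct_sum:
  assumes M1: "matroid_on E1 \<B>1" and M2: "matroid_on E2 \<B>2" and D: "E1 \<inter> E2 = {}"
  shows "matroid_on (E1 \<union> E2) (direct_sum_bases \<B>1 \<B>2)"
  unfolding matroid_on_def
proof (intro conjI ballI)
  show "finite (E1 \<union> E2)" "direct_sum_bases \<B>1 \<B>2 \<noteq> {}"
    using M1 M2 by (auto simp: matroid_on_def direct_sum_bases_def)
  show "B \<subseteq> E1 \<union> E2" if "B \<in> direct_sum_bases \<B>1 \<B>2" for B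
    using that M1 M2 by (auto simp: matroid_on_def direct_sum_bases_def)
next
  fix B B' x assume B: "B \<in> direct_sum_bases \<B>1 \<B>2" and B': "B' \<in> direct_sum_bases \<B>1 \<B>2"
    and x: "x \<in> B - B'"
  obtain A1 A2 where A: "A1 \<in> \<B>1" "A2 \<in> \<B>2" "B = A1 \<union> A2" using B by (auto simp: direct_sum_bases_def)
  obtain C1 C2 where C: "C1 \<in> \<B>1" "C2 \<in> \<B>2" "B' = C1 \<union> C2" using B' by (auto simp: direct_sum_bases_def)
  have s: "A1 \<subseteq> E1" "C1 \<subseteq> E1" "A2 \<subseteq> E2" "C2 \<subseteq> E2"
    using A C M1 M2 by (auto simp: matroid_on_def)
  show "\<exists>y\<in>B' - B. insert y (B - {x}) \<in> direct_sum_bases \<B>1 \<B>2"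
  proof (cases "x \<in> A1")
    case True
    then obtain y where y: "y \<in> C1 - A1" "insert y (A1 - {x}) \<in> \<B>1"
      using M1 A C x unfolding matroid_on_def by blast
    have "insert y (B - {x}) = insert y (A1 - {x}) \<union> A2" using A(3) True s D by blast
    also have "\<dots> \<in> direct_sum_bases \<B>1 \<B>2"
      using y(2) A(2) unfolding direct_sum_bases_def by blast
    finally have "insert y (B - {x}) \<in> direct_sum_bases \<B>1 \<B>2" .
    moreover have "y \<in> B' - B" using y s D A C by auto
    ultimately show ?thesis by blast
  next
    case False
    then obtain y where y: "y \<in> C2 - A2" "insert y (A2 - {x}) \<in> \<B>2"
      using M2 A C x unfolding matroid_on_def by blast
    have "insert y (B - {x}) = A1 \<union> insert y (A2 - {x})" using A(3) False by blast
    also have "\<dots> \<in> direct_sum_bases \<B>1 \<B>2"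
      using y(2) A(1) unfolding direct_sum_bases_def by blast
    finally have "insert y (B - {x}) \<in> direct_sum_bases \<B>1 \<B>2" .
    moreover have "y \<in> B' - B" using y s D A C by auto
    ultimately show ?thesis by blast
  qed
qed

text \<open>Induction on the number of
  E2-elements of B outside B': each exchange must stay inside E2, as it keeps |B n E1|.\<close>
lemma matroid_on_mix_parts:
  assumes M: "matroid_on (E1 \<union> E2) \<N>" and D: "E1 \<inter> E2 = {}"
    and K: "\<forall>B\<in>\<N>. card (B \<inter> E1) = k" and "B \<in> \<N>" "B' \<in> \<N>"
  shows "(B \<inter> E1) \<union> (B' \<inter> E2) \<in> \<N>"
proof -
  have card_parts: "card C = card (C \<inter> E1) + card (C \<inter> E2)" if "C \<in> \<N>" for C
  proof -
    have "finite C" using M that by (rule matroid_on_finite_base)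
    moreover have "C \<subseteq> E1 \<union> E2" using M that by (auto simp: matroid_on_def)
    ultimately have "card ((C \<inter> E1) \<union> (C \<inter> E2)) = card (C \<inter> E1) + card (C \<inter> E2)"
      using D by (intro card_Un_disjoint) auto
    moreover have "(C \<inter> E1) \<union> (C \<inter> E2) = C" using \<open>C \<subseteq> E1 \<union> E2\<close> by auto
    ultimately show ?thesis by simp
  qed
  have "(B \<inter> E1) \<union> (B' \<inter> E2) \<in> \<N>" if "B \<in> \<N>" "card (B \<inter> E2 - B') = n" for n B
    using that
  proof (induction n arbitrary: B)
    case 0
    have sub: "B \<subseteq> E1 \<union> E2" "B' \<subseteq> E1 \<union> E2" using M 0 assms(5) by (auto simp: matroid_on_def)
    have fin: "finite B" "finite B'" using M 0 assms(5) matroid_on_finite_base by auto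
    have "card (B \<inter> E1) + card (B \<inter> E2) = card (B' \<inter> E1) + card (B' \<inter> E2)"
      using matroid_on_bases_card[OF M 0(1) assms(5)] card_parts 0(1) assms(5) by simp
    then have "card (B \<inter> E2) = card (B' \<inter> E2)" using K 0 assms(5) by simp
    moreover have "B \<inter> E2 \<subseteq> B' \<inter> E2" using 0 fin by auto
    ultimately have "B \<inter> E2 = B' \<inter> E2" using fin by (simp add: card_subset_eq)
    then have "(B \<inter> E1) \<union> (B' \<inter> E2) = B" using sub by auto
    then show ?case using 0 by simp
  next
    case (Suc n)
    have sub: "B \<subseteq> E1 \<union> E2" using M Suc by (auto simp: matroid_on_def)
    have fin: "finite B" using M Suc matroid_on_finite_base by auto
    then obtain x where x: "x \<in> B \<inter> E2 - B'" using Suc by (metis card.empty ex_in_conv nat.simps(3))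
    then obtain y where y: "y \<in> B' - B" "insert y (B - {x}) \<in> \<N>"
      using M Suc assms(5) unfolding matroid_on_def by blast
    have "y \<in> E2"
    proof (rule ccontr)
      assume "y \<notin> E2"
      then have "insert y (B - {x}) \<inter> E1 = insert y (B \<inter> E1)"
        using x y assms(5) M D unfolding matroid_on_def by auto
      then have "card (insert y (B - {x}) \<inter> E1) = Suc (card (B \<inter> E1))" using y fin by simp
      then show False using K y Suc by auto
    qed
    then have parts: "insert y (B - {x}) \<inter> E1 = B \<inter> E1"
      "insert y (B - {x}) \<inter> E2 - B' = (B \<inter> E2 - B') - {x}" using x y D by auto
    then have "card (insert y (B - {x}) \<inter> E2 - B') = n" using Suc x fin by simp
    then show ?case using Suc.IH[OF y(2)] parts by simp
  qed
  then show ?thesis using assms(4) by blast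
qed

text \<open>Restricting a mixing-closed matroid on E1 u E2 to E1 gives a matroid: an exchange in a
  base whose E2-part is borrowed from the target stays within E1.\<close>
lemma matroid_on_restrict:
  assumes M: "matroid_on (E1 \<union> E2) \<N>" and D: "E1 \<inter> E2 = {}"
    and mix: "\<And>B B'. B \<in> \<N> \<Longrightarrow> B' \<in> \<N> \<Longrightarrow> (B \<inter> E1) \<union> (B' \<inter> E2) \<in> \<N>"
  shows "matroid_on E1 ((\<lambda>B. B \<inter> E1) ` \<N>)"
  unfolding matroid_on_def
proof (intro conjI ballI)
  show "finite E1" "(\<lambda>B. B \<inter> E1) ` \<N> \<noteq> {}" using M by (simp_all add: matroid_on_def)
  show "C \<subseteq> E1" if "C \<in> (\<lambda>B. B \<inter> E1) ` \<N>" for C using that by auto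
next
  fix C C' x assume "C \<in> (\<lambda>B. B \<inter> E1) ` \<N>" "C' \<in> (\<lambda>B. B \<inter> E1) ` \<N>" and x: "x \<in> C - C'"
  then obtain B B' where B: "B \<in> \<N>" "C = B \<inter> E1" and B': "B' \<in> \<N>" "C' = B' \<inter> E1" by auto
  have mixed: "C' \<union> (B \<inter> E2) \<in> \<N>" using mix[OF B'(1) B(1)] B' by simp
  have "x \<in> B - (C' \<union> (B \<inter> E2))" using x B D by auto
  then obtain y where y: "y \<in> C' \<union> (B \<inter> E2) - B" "insert y (B - {x}) \<in> \<N>"
    using M B(1) mixed unfolding matroid_on_def by blast
  have yC: "y \<in> C' - C" using y B by auto
  then have "insert y (B - {x}) \<inter> E1 = insert y (C - {x})" using B B' by auto
  then show "\<exists>y\<in>C' - C. insert y (C - {x}) \<in> (\<lambda>B. B \<inter> E1) ` \<N>" using y yC by (metis image_eqI)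
qed

lemma matroid_on_sub_direct_sum:
  assumes M: "matroid_on (E1 \<union> E2) \<N>" and D: "E1 \<inter> E2 = {}"
    and M1: "matroid_on E1 \<B>1" and M2: "matroid_on E2 \<B>2" and S: "\<N> \<subseteq> direct_sum_bases \<B>1 \<B>2"
  obtains \<A>1 \<A>2 where "matroid_on E1 \<A>1" "matroid_on E2 \<A>2" "\<A>1 \<subseteq> \<B>1" "\<A>2 \<subseteq> \<B>2"
    "\<N> = direct_sum_bases \<A>1 \<A>2"
proof
  obtain b0 where b0: "b0 \<in> \<B>1" using M1 by (auto simp: matroid_on_def)
  have K: "\<forall>B\<in>\<N>. card (B \<inter> E1) = card b0"
    using direct_sum_bases_parts(1)[OF M1 M2 D] S matroid_on_bases_card[OF M1 _ b0] by blast
  have mix1: "(B \<inter> E1) \<union> (B' \<inter> E2) \<in> \<N>" if "B \<in> \<N>" "B' \<in> \<N>" for B B'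
    using matroid_on_mix_parts[OF M D K that] .
  have mix2: "(B \<inter> E2) \<union> (B' \<inter> E1) \<in> \<N>" if "B \<in> \<N>" "B' \<in> \<N>" for B B'
    using mix1[OF that(2,1)] by (simp add: Un_commute)
  show "matroid_on E1 ((\<lambda>B. B \<inter> E1) ` \<N>)" using matroid_on_restrict[OF M D mix1] .
  have "matroid_on (E2 \<union> E1) \<N>" "E2 \<inter> E1 = {}" using M D by (simp_all only: Un_commute Int_commute)
  then show "matroid_on E2 ((\<lambda>B. B \<inter> E2) ` \<N>)" using matroid_on_restrict mix2 by blast
  show "(\<lambda>B. B \<inter> E1) ` \<N> \<subseteq> \<B>1" "(\<lambda>B. B \<inter> E2) ` \<N> \<subseteq> \<B>2"
    using direct_sum_bases_parts[OF M1 M2 D] S by auto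
  show "\<N> = direct_sum_bases ((\<lambda>B. B \<inter> E1) ` \<N>) ((\<lambda>B. B \<inter> E2) ` \<N>)"
  proof (intro equalityI subsetI)
    fix B assume B: "B \<in> \<N>"
    then have "B = (B \<inter> E1) \<union> (B \<inter> E2)" using M by (auto simp: matroid_on_def)
    then show "B \<in> direct_sum_bases ((\<lambda>B. B \<inter> E1) ` \<N>) ((\<lambda>B. B \<inter> E2) ` \<N>)"
      using B unfolding direct_sum_bases_def by blast
  next
    fix B assume "B \<in> direct_sum_bases ((\<lambda>B. B \<inter> E1) ` \<N>) ((\<lambda>B. B \<inter> E2) ` \<N>)"
    then obtain C C' where "C \<in> \<N>" "C' \<in> \<N>" "B = (C \<inter> E1) \<union> (C' \<inter> E2)"
      unfolding direct_sum_bases_def by blast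
    then show "B \<in> \<N>" using mix1 by simp
  qed
qed

text \<open>A split of P(M1) by matroids N1, N2 gives the split of P(M1 (+) M2) by N1 (+) M2, N2 (+) M2.\<close>
lemma hyperplane_split_direct_sum_left:
  assumes M1: "matroid_on E1 \<B>1" and M2: "matroid_on E2 \<B>2" and D: "E1 \<inter> E2 = {}"
    and H: "has_nontrivial_hyperplane_split E1 \<B>1"
  shows "has_nontrivial_hyperplane_split (E1 \<union> E2) (direct_sum_bases \<B>1 \<B>2)"
proof -
  obtain \<N>1 \<N>2 where N: "matroid_on E1 \<N>1" "matroid_on E1 \<N>2"
    and split: "is_split (base_polytope \<B>1) (base_polytope \<N>1) (base_polytope \<N>2)"
    using H unfolding hyperplane_split_iff by blast
  have "is_split (base_polytope \<B>1 + base_polytope \<B>2)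
          (base_polytope \<N>1 + base_polytope \<B>2) (base_polytope \<N>2 + base_polytope \<B>2)"
  proof (rule is_split_plus[OF split])
    show "base_polytope \<B>1 \<subseteq> supported E1" "base_polytope \<B>2 \<subseteq> supported E2"
      using M1 M2 by (simp_all add: matroid_on_base_polytope_supported)
    show "convex (base_polytope \<B>2)" by (simp add: base_polytope_def)
    show "base_polytope \<B>2 \<noteq> {}" using M2 by (rule matroid_on_base_polytope_nonempty)
  qed (rule D)
  then have "is_split (base_polytope (direct_sum_bases \<B>1 \<B>2))
      (base_polytope (direct_sum_bases \<N>1 \<B>2)) (base_polytope (direct_sum_bases \<N>2 \<B>2))"
    using N M1 M2 D by (simp add: matroid_on_base_polytope_direct_sum)
  then show ?thesis
    unfolding hyperplane_split_iff
    using matroid_on_direct_sum[OF N(1) M2 D] matroid_on_direct_sum[OF N(2) M2 D] by blast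
qed

text \<open>Both pieces of a split of P(M1 (+) M2) are polytopes of direct sums of submatroids
  of M1 and M2; the split then restricts to a split of one of the factors.\<close>
lemma hyperplane_split_direct_sum_factor:
  assumes M1: "matroid_on E1 \<B>1" and M2: "matroid_on E2 \<B>2" and D: "E1 \<inter> E2 = {}"
    and H: "has_nontrivial_hyperplane_split (E1 \<union> E2) (direct_sum_bases \<B>1 \<B>2)"
  shows "has_nontrivial_hyperplane_split E1 \<B>1 \<or> has_nontrivial_hyperplane_split E2 \<B>2"
proof -
  obtain \<N> \<N>' where N: "matroid_on (E1 \<union> E2) \<N>" "matroid_on (E1 \<union> E2) \<N>'"
    and split: "is_split (base_polytope (direct_sum_bases \<B>1 \<B>2)) (base_polytope \<N>) (base_polytope \<N>')"
    using H unfolding hyperplane_split_iff by blast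
  have "base_polytope \<N> \<subseteq> base_polytope (direct_sum_bases \<B>1 \<B>2)"
    "base_polytope \<N>' \<subseteq> base_polytope (direct_sum_bases \<B>1 \<B>2)"
    using split unfolding is_split_def by blast+
  then have sub: "\<N> \<subseteq> direct_sum_bases \<B>1 \<B>2" "\<N>' \<subseteq> direct_sum_bases \<B>1 \<B>2"
    by (simp_all add: base_polytope_subset_imp_bases_subset)
  obtain \<A>1 \<A>2 where A: "matroid_on E1 \<A>1" "matroid_on E2 \<A>2" "\<A>1 \<subseteq> \<B>1" "\<A>2 \<subseteq> \<B>2"
      "\<N> = direct_sum_bases \<A>1 \<A>2"
    by (rule matroid_on_sub_direct_sum[OF N(1) D M1 M2 sub(1)])
  obtain \<C>1 \<C>2 where C: "matroid_on E1 \<C>1" "matroid_on E2 \<C>2" "\<C>1 \<subseteq> \<B>1" "\<C>2 \<subseteq> \<B>2"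
      "\<N>' = direct_sum_bases \<C>1 \<C>2"
    by (rule matroid_on_sub_direct_sum[OF N(2) D M1 M2 sub(2)])
  note sum = matroid_on_base_polytope_direct_sum[OF _ _ D]
  have "is_split (base_polytope \<B>1) (base_polytope \<A>1) (base_polytope \<C>1) \<or>
        is_split (base_polytope \<B>2) (base_polytope \<A>2) (base_polytope \<C>2)"
  proof (rule is_split_plus_factor)
    show "is_split (base_polytope \<B>1 + base_polytope \<B>2)
        (base_polytope \<A>1 + base_polytope \<A>2) (base_polytope \<C>1 + base_polytope \<C>2)"
      using split unfolding A(5) C(5) sum[OF M1 M2] sum[OF A(1,2)] sum[OF C(1,2)] .
    show "base_polytope \<B>1 \<subseteq> supported E1" "base_polytope \<B>2 \<subseteq> supported E2"
      using M1 M2 by (simp_all add: matroid_on_base_polytope_supported)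
    show "base_polytope \<B>1 \<noteq> {}" "base_polytope \<B>2 \<noteq> {}"
      using M1 M2 by (simp_all add: matroid_on_base_polytope_nonempty)
    show "base_polytope \<A>1 \<subseteq> base_polytope \<B>1" "base_polytope \<C>1 \<subseteq> base_polytope \<B>1"
      "base_polytope \<A>2 \<subseteq> base_polytope \<B>2" "base_polytope \<C>2 \<subseteq> base_polytope \<B>2"
      using A C by (simp_all add: base_polytope_mono)
  qed (rule D)
  then show ?thesis unfolding hyperplane_split_iff using A(1,2) C(1,2) by blast
qed

theorem theorem2:
  fixes E1 E2 :: "'a::finite set" and \<B>1 \<B>2 :: "'a set set"
  assumes "matroid_on E1 \<B>1" and "matroid_on E2 \<B>2" and "E1 \<inter> E2 = {}"
  shows "has_nontrivial_hyperplane_split (E1 \<union> E2) (direct_sum_bases \<B>1 \<B>2) \<longleftrightarrow>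
         has_nontrivial_hyperplane_split E1 \<B>1 \<or> has_nontrivial_hyperplane_split E2 \<B>2"
proof
  assume "has_nontrivial_hyperplane_split (E1 \<union> E2) (direct_sum_bases \<B>1 \<B>2)"
  then show "has_nontrivial_hyperplane_split E1 \<B>1 \<or> has_nontrivial_hyperplane_split E2 \<B>2"
    by (rule hyperplane_split_direct_sum_factor[OF assms])
next
  assume "has_nontrivial_hyperplane_split E1 \<B>1 \<or> has_nontrivial_hyperplane_split E2 \<B>2"
  then show "has_nontrivial_hyperplane_split (E1 \<union> E2) (direct_sum_bases \<B>1 \<B>2)"
  proof
    assume "has_nontrivial_hyperplane_split E1 \<B>1"
    then show ?thesis by (rule hyperplane_split_direct_sum_left[OF assms])
  next
    assume H2: "has_nontrivial_hyperplane_split E2 \<B>2"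
    have "E2 \<inter> E1 = {}" using assms(3) by blast
    then have "has_nontrivial_hyperplane_split (E2 \<union> E1) (direct_sum_bases \<B>2 \<B>1)"
      using hyperplane_split_direct_sum_left[OF assms(2,1) _ H2] by blast
    then show ?thesis by (simp only: Un_commute[of E2 E1] direct_sum_bases_commute[of \<B>2 \<B>1])
  qed
qed

end
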